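(* If $(A,\pi_A)$, $(B,\pi_B)$, $(C,\pi_C)$ are signed graphs such that $(A,\pi_A)\,\square\,(B,\pi_B)\equiv(A,\pi_A)\,\square\,(C,\pi_C)$, then $(B,\pi_B)\equiv(C,\pi_C)$.
   Context: A signed graph $(G,\sigma)$ is a simple loopless undirected graph with a signature $\sigma:E(G)\to\{+1,-1\}$. Switching a vertex negates the signs of its incident edges. Two signed graphs are equivalent ($\equiv$) if there is a graph isomorphism between them carrying one signature to a signature obtained from the other by switching a set of vertices. The Cartesian product $(G,\sigma)\,\square\,(H,\pi)$ is the signed graph on $G\,\square\,H$ where $(u,v_1)(u,v_2)$ has sign $\pi(v_1v_2)$ and $(u_1,v)(u_2,v)$ has sign $\sigma(u_1u_2)$. *)

theory Defs
  imports Main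
begin

definition signed_graph :: "'a set \<Rightarrow> 'a set set \<Rightarrow> ('a set \<Rightarrow> int) \<Rightarrow> bool" where
  "signed_graph V E \<sigma> \<longleftrightarrow>
     (\<forall>e\<in>E. \<exists>u v. u \<in> V \<and> v \<in> V \<and> u \<noteq> v \<and> e = {u, v}) \<and>
     (\<forall>e\<in>E. \<sigma> e = 1 \<or> \<sigma> e = -1)"

definition switch :: "('a set \<Rightarrow> int) \<Rightarrow> 'a set \<Rightarrow> 'a set \<Rightarrow> int" where
  "switch \<sigma> S e = (if card (e \<inter> S) = 1 then - \<sigma> e else \<sigma> e)"

definition sg_equiv ::
  "'a set \<Rightarrow> 'a set set \<Rightarrow> ('a set \<Rightarrow> int) \<Rightarrow>
   'b set \<Rightarrow> 'b set set \<Rightarrow> ('b set \<Rightarrow> int) \<Rightarrow> bool" where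
  "sg_equiv V E \<sigma> V' E' \<sigma>' \<longleftrightarrow>
     (\<exists>f S. bij_betw f V V' \<and>
        (\<forall>u\<in>V. \<forall>v\<in>V. {u, v} \<in> E \<longleftrightarrow> {f u, f v} \<in> E') \<and>
        S \<subseteq> V \<and>
        (\<forall>e\<in>E. \<sigma>' (f ` e) = switch \<sigma> S e))"

definition cprod_V :: "'a set \<Rightarrow> 'b set \<Rightarrow> ('a \<times> 'b) set" where
  "cprod_V VG VH = VG \<times> VH"

definition cprod_E ::
  "'a set \<Rightarrow> 'a set set \<Rightarrow> 'b set \<Rightarrow> 'b set set \<Rightarrow> ('a \<times> 'b) set set" where
  "cprod_E VG EG VH EH =
     {{(u, v1), (u, v2)} | u v1 v2. u \<in> VG \<and> {v1, v2} \<in> EH} \<union>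
     {{(u1, v), (u2, v)} | u1 u2 v. v \<in> VH \<and> {u1, u2} \<in> EG}"

text \<open>Sign of a product edge: if both endpoints share the first coordinate
(edge (u,v1)(u,v2)) it is the H-sign of v1v2, otherwise (edge (u1,v)(u2,v))
it is the G-sign of u1u2.\<close>

definition cprod_sig ::
  "('a set \<Rightarrow> int) \<Rightarrow> ('b set \<Rightarrow> int) \<Rightarrow> ('a \<times> 'b) set \<Rightarrow> int" where
  "cprod_sig \<sigma> \<pi> e = (if card (fst ` e) = 1 then \<pi> (snd ` e) else \<sigma> (fst ` e))"

end

theory Submission
  imports Defs "HOL-Library.FuncSet"
begin

(*
  The argument counts homomorphisms from patterns, in the style of Lovasz.  A pattern is a finite
  set K with pairs I of elements of K.  A pattern homomorphism into a signed graph is a map phi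
  on K together with a switching x of K such that the pairs in a prescribed set M are sent to
  edges, the other pairs of I are collapsed, and the pairs that are negative after switching by x
  form a prescribed set N; identifications Q and separations D may also be imposed.  These counts
  are invariant under switching equivalence.  An edge of A x B lies in one factor and takes its
  sign there, and a switching of A x B is the sum of switchings of the factors, whence
    2^|K| hom(A x B; M, N) = sum over M1 <= M, N1 <= I of hom(A; M1, N1) hom(B; M - M1, N xor N1),
  where xor is symmetric difference.
  The terms with M1 empty add up to c hom(B; M, N) with c > 0 depending only on A, so induction
  on M cancels A.  Inclusion-exclusion over separations then gives equal counts of injective
  pattern homomorphisms, and using B (resp. C) itself as pattern yields switching embeddings
  B -> C and C -> B, which are equivalences by counting vertices and edges.
*)

lemma signed_graph_edgeD:
  assumes "signed_graph V E \<sigma>" and "{u, v} \<in> E"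
  shows "u \<noteq> v" and "u \<in> V" and "v \<in> V"
  using assms unfolding signed_graph_def by (metis doubleton_eq_iff)+

lemma signed_graph_sign:
  "signed_graph V E \<sigma> \<Longrightarrow> e \<in> E \<Longrightarrow> \<sigma> e = 1 \<or> \<sigma> e = -1"
  unfolding signed_graph_def by blast

lemma signed_graph_edges_subset: "signed_graph V E \<sigma> \<Longrightarrow> E \<subseteq> Pow V"
  unfolding signed_graph_def by auto

lemma switch_doubleton:
  "u \<noteq> v \<Longrightarrow> switch \<sigma> S {u, v} = (if (u \<in> S) \<noteq> (v \<in> S) then - \<sigma> {u, v} else \<sigma> {u, v})"
  unfolding switch_def by (cases "u \<in> S"; cases "v \<in> S") (auto simp: Int_insert_left)

definition negative_edge :: "'v set set \<Rightarrow> ('v set \<Rightarrow> int) \<Rightarrow> 'v \<Rightarrow> 'v \<Rightarrow> bool" where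
  "negative_edge E \<sigma> u v \<longleftrightarrow> {u, v} \<in> E \<and> \<sigma> {u, v} = -1"

lemma negative_edge_loop: "signed_graph V E \<sigma> \<Longrightarrow> \<not> negative_edge E \<sigma> u u"
  using signed_graph_edgeD(1)[of V E \<sigma> u u] by (auto simp: negative_edge_def)

definition switched_negative ::
  "'v set set \<Rightarrow> ('v set \<Rightarrow> int) \<Rightarrow> ('k \<Rightarrow> 'v) \<Rightarrow> ('k \<Rightarrow> bool) \<Rightarrow> 'k \<Rightarrow> 'k \<Rightarrow> bool" where
  "switched_negative E \<sigma> \<phi> x a b \<longleftrightarrow> negative_edge E \<sigma> (\<phi> a) (\<phi> b) \<noteq> (x a \<noteq> x b)"

(* Pairs outside M must be collapsed; a collapsed pair is never negative, as signed graphs are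
   loopless. *)
definition pattern_edge_hom ::
  "'v set set \<Rightarrow> ('v set \<Rightarrow> int) \<Rightarrow> ('k \<times> 'k) set \<Rightarrow> ('k \<times> 'k) set \<Rightarrow>
   ('k \<Rightarrow> 'v) \<Rightarrow> ('k \<Rightarrow> bool) \<Rightarrow> 'k \<Rightarrow> 'k \<Rightarrow> bool" where
  "pattern_edge_hom E \<sigma> M N \<phi> x a b \<longleftrightarrow>
     (if (a, b) \<in> M then {\<phi> a, \<phi> b} \<in> E else \<phi> a = \<phi> b) \<and>
     ((a, b) \<in> N \<longleftrightarrow> switched_negative E \<sigma> \<phi> x a b)"

definition is_pattern_hom ::
  "'v set set \<Rightarrow> ('v set \<Rightarrow> int) \<Rightarrow> ('k \<times> 'k) set \<Rightarrow> ('k \<times> 'k) set \<Rightarrow> ('k \<times> 'k) set \<Rightarrow>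
   ('k \<times> 'k) set \<Rightarrow> ('k \<times> 'k) set \<Rightarrow> ('k \<Rightarrow> 'v) \<Rightarrow> ('k \<Rightarrow> bool) \<Rightarrow> bool" where
  "is_pattern_hom E \<sigma> I M N Q D \<phi> x \<longleftrightarrow>
     (\<forall>(a, b)\<in>I. pattern_edge_hom E \<sigma> M N \<phi> x a b) \<and>
     (\<forall>(a, b)\<in>Q. \<phi> a = \<phi> b) \<and> (\<forall>(a, b)\<in>D. \<phi> a \<noteq> \<phi> b)"

definition pattern_homs ::
  "'v set \<Rightarrow> 'v set set \<Rightarrow> ('v set \<Rightarrow> int) \<Rightarrow> 'k set \<Rightarrow> ('k \<times> 'k) set \<Rightarrow> ('k \<times> 'k) set \<Rightarrow>
   ('k \<times> 'k) set \<Rightarrow> ('k \<times> 'k) set \<Rightarrow> ('k \<times> 'k) set \<Rightarrow> (('k \<Rightarrow> 'v) \<times> ('k \<Rightarrow> bool)) set" where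
  "pattern_homs V E \<sigma> K I M N Q D =
     {(\<phi>, x). \<phi> \<in> K \<rightarrow>\<^sub>E V \<and> x \<in> K \<rightarrow>\<^sub>E UNIV \<and> is_pattern_hom E \<sigma> I M N Q D \<phi> x}"

lemma finite_pattern_homs:
  "finite V \<Longrightarrow> finite K \<Longrightarrow> finite (pattern_homs V E \<sigma> K I M N Q D)"
  unfolding pattern_homs_def
  by (rule finite_subset[of _ "(K \<rightarrow>\<^sub>E V) \<times> (K \<rightarrow>\<^sub>E UNIV)"])
     (auto intro!: finite_cartesian_product finite_PiE)

lemma is_pattern_hom_labels:
  assumes "signed_graph V E \<sigma>" and "is_pattern_hom E \<sigma> I M N Q D \<phi> x"
  shows "M \<inter> I = {(a, b) \<in> I. \<phi> a \<noteq> \<phi> b}"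
    and "N \<inter> I = {(a, b) \<in> I. switched_negative E \<sigma> \<phi> x a b}"
proof -
  have edge: "pattern_edge_hom E \<sigma> M N \<phi> x a b" if "(a, b) \<in> I" for a b
    using assms(2) that unfolding is_pattern_hom_def by blast
  show "M \<inter> I = {(a, b) \<in> I. \<phi> a \<noteq> \<phi> b}"
    using edge signed_graph_edgeD(1)[OF assms(1)]
    unfolding pattern_edge_hom_def by (fastforce split: if_splits)
  show "N \<inter> I = {(a, b) \<in> I. switched_negative E \<sigma> \<phi> x a b}"
    using edge unfolding pattern_edge_hom_def by blast
qed

lemma negative_edge_switching_iso:
  assumes sg: "signed_graph V E \<sigma>" and inj: "inj_on f V"
    and iso: "\<forall>u\<in>V. \<forall>v\<in>V. {u, v} \<in> E \<longleftrightarrow> {f u, f v} \<in> E'"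
    and sig: "\<forall>e\<in>E. \<sigma>' (f ` e) = switch \<sigma> S e"
    and uv: "u \<in> V" "v \<in> V" "{u, v} \<in> E \<or> u = v"
  shows "negative_edge E' \<sigma>' (f u) (f v) \<longleftrightarrow> negative_edge E \<sigma> u v \<noteq> ((u \<in> S) \<noteq> (v \<in> S))"
proof (cases "u = v")
  case True
  then have "{u, v} \<notin> E" using signed_graph_edgeD(1)[OF sg] by blast
  moreover have "{f u, f v} \<notin> E'" using calculation iso uv by blast
  ultimately show ?thesis using True by (simp add: negative_edge_def)
next
  case False
  then have e: "{u, v} \<in> E" using uv by blast
  have "\<sigma>' {f u, f v} = switch \<sigma> S {u, v}" using sig e by force
  then show ?thesis
    using e iso uv signed_graph_sign[OF sg e] switch_doubleton[OF False, of \<sigma> S]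
    by (auto simp: negative_edge_def)
qed

lemma is_pattern_hom_cong:
  assumes "I \<subseteq> K \<times> K" "Q \<subseteq> K \<times> K" "D \<subseteq> K \<times> K"
    and edge: "\<And>a b. a \<in> K \<Longrightarrow> b \<in> K \<Longrightarrow> {\<phi>' a, \<phi>' b} \<in> E' \<longleftrightarrow> {\<phi> a, \<phi> b} \<in> E"
    and eq: "\<And>a b. a \<in> K \<Longrightarrow> b \<in> K \<Longrightarrow> \<phi>' a = \<phi>' b \<longleftrightarrow> \<phi> a = \<phi> b"
    and sign: "\<And>a b. a \<in> K \<Longrightarrow> b \<in> K \<Longrightarrow> {\<phi> a, \<phi> b} \<in> E \<or> \<phi> a = \<phi> b \<Longrightarrow>
       switched_negative E' \<sigma>' \<phi>' x' a b \<longleftrightarrow> switched_negative E \<sigma> \<phi> x a b"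
  shows "is_pattern_hom E' \<sigma>' I M N Q D \<phi>' x' \<longleftrightarrow> is_pattern_hom E \<sigma> I M N Q D \<phi> x"
proof -
  have "pattern_edge_hom E' \<sigma>' M N \<phi>' x' a b \<longleftrightarrow> pattern_edge_hom E \<sigma> M N \<phi> x a b"
    if "a \<in> K" "b \<in> K" for a b
    using edge[OF that] eq[OF that] sign[OF that] unfolding pattern_edge_hom_def by auto
  then have "(\<forall>(a, b)\<in>I. pattern_edge_hom E' \<sigma>' M N \<phi>' x' a b) \<longleftrightarrow>
      (\<forall>(a, b)\<in>I. pattern_edge_hom E \<sigma> M N \<phi> x a b)"
    using assms(1) by blast
  moreover have "(\<forall>(a, b)\<in>Q. \<phi>' a = \<phi>' b) \<longleftrightarrow> (\<forall>(a, b)\<in>Q. \<phi> a = \<phi> b)"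
    using assms(2) eq by blast
  moreover have "(\<forall>(a, b)\<in>D. \<phi>' a \<noteq> \<phi>' b) \<longleftrightarrow> (\<forall>(a, b)\<in>D. \<phi> a \<noteq> \<phi> b)"
    using assms(3) eq by blast
  ultimately show ?thesis unfolding is_pattern_hom_def by blast
qed

lemma is_pattern_hom_switching_iso:
  assumes sg: "signed_graph V E \<sigma>" and inj: "inj_on f V"
    and iso: "\<forall>u\<in>V. \<forall>v\<in>V. {u, v} \<in> E \<longleftrightarrow> {f u, f v} \<in> E'"
    and sig: "\<forall>e\<in>E. \<sigma>' (f ` e) = switch \<sigma> S e"
    and K: "I \<subseteq> K \<times> K" "Q \<subseteq> K \<times> K" "D \<subseteq> K \<times> K" and \<phi>: "\<phi> \<in> K \<rightarrow>\<^sub>E V"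
  shows "is_pattern_hom E' \<sigma>' I M N Q D (\<lambda>a\<in>K. f (\<phi> a)) (\<lambda>a\<in>K. x a \<noteq> (\<phi> a \<in> S)) \<longleftrightarrow>
         is_pattern_hom E \<sigma> I M N Q D \<phi> x"
proof (rule is_pattern_hom_cong[OF K])
  fix a b assume ab: "a \<in> K" "b \<in> K"
  then have V: "\<phi> a \<in> V" "\<phi> b \<in> V" using \<phi> by auto
  show "{(\<lambda>a\<in>K. f (\<phi> a)) a, (\<lambda>a\<in>K. f (\<phi> a)) b} \<in> E' \<longleftrightarrow> {\<phi> a, \<phi> b} \<in> E"
    using ab V iso by simp
  show "(\<lambda>a\<in>K. f (\<phi> a)) a = (\<lambda>a\<in>K. f (\<phi> a)) b \<longleftrightarrow> \<phi> a = \<phi> b"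
    using ab V inj by (simp add: inj_on_eq_iff)
  assume "{\<phi> a, \<phi> b} \<in> E \<or> \<phi> a = \<phi> b"
  then show "switched_negative E' \<sigma>' (\<lambda>a\<in>K. f (\<phi> a)) (\<lambda>a\<in>K. x a \<noteq> (\<phi> a \<in> S)) a b
      \<longleftrightarrow> switched_negative E \<sigma> \<phi> x a b"
    using ab V negative_edge_switching_iso[OF sg inj iso sig V] by (auto simp: switched_negative_def)
qed

lemma card_pattern_homs_sg_equiv:
  assumes sg: "signed_graph V E \<sigma>" and eqv: "sg_equiv V E \<sigma> V' E' \<sigma>'"
    and K: "I \<subseteq> K \<times> K" "Q \<subseteq> K \<times> K" "D \<subseteq> K \<times> K"
  shows "card (pattern_homs V E \<sigma> K I M N Q D) = card (pattern_homs V' E' \<sigma>' K I M N Q D)"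
proof -
  obtain f S where f: "bij_betw f V V'"
    and iso: "\<forall>u\<in>V. \<forall>v\<in>V. {u, v} \<in> E \<longleftrightarrow> {f u, f v} \<in> E'"
    and sig: "\<forall>e\<in>E. \<sigma>' (f ` e) = switch \<sigma> S e"
    using eqv unfolding sg_equiv_def by blast
  have inj: "inj_on f V" using f by (rule bij_betw_imp_inj_on)
  define g where "g = inv_into V f"
  have gf: "g (f v) = v" if "v \<in> V" for v
    unfolding g_def using inj that by simp
  have fg: "f (g v) = v" and gV: "g v \<in> V" if "v \<in> V'" for v
    unfolding g_def using f that by (auto simp: bij_betw_inv_into_right inv_into_into bij_betw_def)
  define h where "h = (\<lambda>(\<phi>, x). (\<lambda>a\<in>K. f (\<phi> a), \<lambda>a\<in>K. x a \<noteq> (\<phi> a \<in> S)))"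
  define h' where "h' = (\<lambda>(\<psi>, y). (\<lambda>a\<in>K. g (\<psi> a), \<lambda>a\<in>K. y a \<noteq> (g (\<psi> a) \<in> S)))"
  note hom = is_pattern_hom_switching_iso[OF sg inj iso sig K]
  have "bij_betw h (pattern_homs V E \<sigma> K I M N Q D) (pattern_homs V' E' \<sigma>' K I M N Q D)"
  proof (rule bij_betw_byWitness[where f' = h'])
    show "\<forall>p\<in>pattern_homs V E \<sigma> K I M N Q D. h' (h p) = p"
      unfolding pattern_homs_def h_def h'_def
      by (auto simp: gf fun_eq_iff PiE_iff extensional_def)
    show "\<forall>p\<in>pattern_homs V' E' \<sigma>' K I M N Q D. h (h' p) = p"
      unfolding pattern_homs_def h_def h'_def
      by (auto simp: fg gV fun_eq_iff PiE_iff extensional_def)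
    show "h ` pattern_homs V E \<sigma> K I M N Q D \<subseteq> pattern_homs V' E' \<sigma>' K I M N Q D"
      unfolding pattern_homs_def h_def using hom bij_betwE[OF f] by auto
    show "h' ` pattern_homs V' E' \<sigma>' K I M N Q D \<subseteq> pattern_homs V E \<sigma> K I M N Q D"
    proof (rule image_subsetI)
      fix p assume "p \<in> pattern_homs V' E' \<sigma>' K I M N Q D"
      then obtain \<psi> y where p: "p = (\<psi>, y)" and \<psi>: "\<psi> \<in> K \<rightarrow>\<^sub>E V'" "y \<in> K \<rightarrow>\<^sub>E UNIV"
        and hom': "is_pattern_hom E' \<sigma>' I M N Q D \<psi> y"
        unfolding pattern_homs_def by auto
      define \<phi> where "\<phi> = (\<lambda>a\<in>K. g (\<psi> a))"
      define x where "x = (\<lambda>a\<in>K. y a \<noteq> (g (\<psi> a) \<in> S))"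
      have \<phi>V: "\<phi> \<in> K \<rightarrow>\<^sub>E V" unfolding \<phi>_def using \<psi> gV by auto
      have "(\<lambda>a\<in>K. f (\<phi> a)) = \<psi>" "(\<lambda>a\<in>K. x a \<noteq> (\<phi> a \<in> S)) = y"
        unfolding \<phi>_def x_def using \<psi> fg by (auto simp: fun_eq_iff PiE_iff extensional_def)
      then have "is_pattern_hom E \<sigma> I M N Q D \<phi> x" using hom[OF \<phi>V, where x = x] hom' by simp
      moreover have "h' p = (\<phi>, x)" unfolding p h'_def \<phi>_def x_def by simp
      moreover have "x \<in> K \<rightarrow>\<^sub>E UNIV" unfolding x_def by simp
      ultimately show "h' p \<in> pattern_homs V E \<sigma> K I M N Q D"
        unfolding pattern_homs_def using \<phi>V by auto
    qed
  qed
  then show ?thesis by (rule bij_betw_same_card)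
qed

lemma cprod_edge_iff:
  assumes "p1 \<in> VA" "q1 \<in> VA" "p2 \<in> VB" "q2 \<in> VB"
  shows "{(p1, p2), (q1, q2)} \<in> cprod_E VA EA VB EB \<longleftrightarrow>
           (p1 = q1 \<and> {p2, q2} \<in> EB) \<or> (p2 = q2 \<and> {p1, q1} \<in> EA)"
proof
  assume "{(p1, p2), (q1, q2)} \<in> cprod_E VA EA VB EB"
  then consider (B) u v1 v2 where "{(p1, p2), (q1, q2)} = {(u, v1), (u, v2)}" "{v1, v2} \<in> EB"
    | (A) u1 u2 v where "{(p1, p2), (q1, q2)} = {(u1, v), (u2, v)}" "{u1, u2} \<in> EA"
    unfolding cprod_E_def by (elim UnE CollectE exE conjE) blast+
  then show "(p1 = q1 \<and> {p2, q2} \<in> EB) \<or> (p2 = q2 \<and> {p1, q1} \<in> EA)"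
  proof cases
    case B
    then have "p1 = q1 \<and> {p2, q2} = {v1, v2}"
      unfolding doubleton_eq_iff by (auto simp: insert_commute)
    then show ?thesis using B(2) by simp
  next
    case A
    then have "p2 = q2 \<and> {p1, q1} = {u1, u2}"
      unfolding doubleton_eq_iff by (auto simp: insert_commute)
    then show ?thesis using A(2) by simp
  qed
next
  assume "(p1 = q1 \<and> {p2, q2} \<in> EB) \<or> (p2 = q2 \<and> {p1, q1} \<in> EA)"
  then show "{(p1, p2), (q1, q2)} \<in> cprod_E VA EA VB EB"
  proof
    assume "p1 = q1 \<and> {p2, q2} \<in> EB"
    then show ?thesis unfolding cprod_E_def using assms(1)
      by (intro UnI1 CollectI exI[of _ p1] exI[of _ p2] exI[of _ q2]) auto
  next
    assume "p2 = q2 \<and> {p1, q1} \<in> EA"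
    then show ?thesis unfolding cprod_E_def using assms(3)
      by (intro UnI2 CollectI exI[of _ p1] exI[of _ q1] exI[of _ p2]) auto
  qed
qed

lemma cprod_negative_edge:
  assumes sgA: "signed_graph VA EA \<sigma>A" and sgB: "signed_graph VB EB \<sigma>B"
    and V: "p1 \<in> VA" "q1 \<in> VA" "p2 \<in> VB" "q2 \<in> VB" and "p1 = q1 \<or> p2 = q2"
  shows "negative_edge (cprod_E VA EA VB EB) (cprod_sig \<sigma>A \<sigma>B) (p1, p2) (q1, q2) \<longleftrightarrow>
           negative_edge EA \<sigma>A p1 q1 \<noteq> negative_edge EB \<sigma>B p2 q2"
proof (cases "p1 = q1")
  case True
  have "{p1, q1} \<notin> EA" using True signed_graph_edgeD(1)[OF sgA] by blast
  then have "{(p1, p2), (q1, q2)} \<in> cprod_E VA EA VB EB \<longleftrightarrow> {p2, q2} \<in> EB"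
    using True cprod_edge_iff[OF V] by blast
  moreover have "cprod_sig \<sigma>A \<sigma>B {(p1, p2), (q1, q2)} = \<sigma>B {p2, q2}"
    using True by (simp add: cprod_sig_def)
  ultimately show ?thesis using \<open>{p1, q1} \<notin> EA\<close> by (simp add: negative_edge_def)
next
  case False
  then have "p2 = q2" using assms(7) by blast
  then have "{p2, q2} \<notin> EB" using signed_graph_edgeD(1)[OF sgB] by blast
  then have "{(p1, p2), (q1, q2)} \<in> cprod_E VA EA VB EB \<longleftrightarrow> {p1, q1} \<in> EA"
    using False \<open>p2 = q2\<close> cprod_edge_iff[OF V] by blast
  moreover have "cprod_sig \<sigma>A \<sigma>B {(p1, p2), (q1, q2)} = \<sigma>A {p1, q1}"
    using False by (simp add: cprod_sig_def)
  ultimately show ?thesis using \<open>{p2, q2} \<notin> EB\<close> by (simp add: negative_edge_def)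
qed

lemma signed_graph_cprod:
  assumes sgA: "signed_graph VA EA \<sigma>A" and sgB: "signed_graph VB EB \<sigma>B"
  shows "signed_graph (cprod_V VA VB) (cprod_E VA EA VB EB) (cprod_sig \<sigma>A \<sigma>B)"
proof -
  have "(\<exists>p q. p \<in> cprod_V VA VB \<and> q \<in> cprod_V VA VB \<and> p \<noteq> q \<and> e = {p, q}) \<and>
      (cprod_sig \<sigma>A \<sigma>B e = 1 \<or> cprod_sig \<sigma>A \<sigma>B e = -1)" if e: "e \<in> cprod_E VA EA VB EB" for e
  proof -
    consider (B) u v1 v2 where "e = {(u, v1), (u, v2)}" "u \<in> VA" "{v1, v2} \<in> EB"
      | (A) u1 u2 v where "e = {(u1, v), (u2, v)}" "v \<in> VB" "{u1, u2} \<in> EA"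
      using e unfolding cprod_E_def by (elim UnE CollectE exE conjE) blast+
    then show ?thesis
    proof cases
      case B
      then show ?thesis
        using signed_graph_edgeD[OF sgB B(3)] signed_graph_sign[OF sgB B(3)]
        unfolding cprod_V_def by (auto simp: cprod_sig_def)
    next
      case A
      then show ?thesis
        using signed_graph_edgeD[OF sgA A(3)] signed_graph_sign[OF sgA A(3)]
        unfolding cprod_V_def by (auto simp: cprod_sig_def)
    qed
  qed
  then show ?thesis unfolding signed_graph_def by blast
qed

lemma pattern_edge_hom_cprod:
  assumes sgA: "signed_graph VA EA \<sigma>A" and sgB: "signed_graph VB EB \<sigma>B"
    and V: "\<phi>1 a \<in> VA" "\<phi>1 b \<in> VA" "\<phi>2 a \<in> VB" "\<phi>2 b \<in> VB"
    and \<phi>: "\<phi> a = (\<phi>1 a, \<phi>2 a)" "\<phi> b = (\<phi>1 b, \<phi>2 b)"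
    and x: "x a = (y a \<noteq> z a)" "x b = (y b \<noteq> z b)"
    and M1: "(a, b) \<in> M1 \<longleftrightarrow> (a, b) \<in> M \<and> \<phi>1 a \<noteq> \<phi>1 b"
    and N1: "(a, b) \<in> N1 \<longleftrightarrow> switched_negative EA \<sigma>A \<phi>1 y a b"
  shows "pattern_edge_hom (cprod_E VA EA VB EB) (cprod_sig \<sigma>A \<sigma>B) M N \<phi> x a b \<longleftrightarrow>
           pattern_edge_hom EA \<sigma>A M1 N1 \<phi>1 y a b \<and>
           pattern_edge_hom EB \<sigma>B (M - M1) {e. (e \<in> N) \<noteq> (e \<in> N1)} \<phi>2 z a b"
proof -
  have sw: "switched_negative (cprod_E VA EA VB EB) (cprod_sig \<sigma>A \<sigma>B) \<phi> x a b \<longleftrightarrow>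
      switched_negative EA \<sigma>A \<phi>1 y a b \<noteq> switched_negative EB \<sigma>B \<phi>2 z a b"
    if "\<phi>1 a = \<phi>1 b \<or> \<phi>2 a = \<phi>2 b"
    using cprod_negative_edge[OF sgA sgB V that] unfolding switched_negative_def \<phi> x by auto
  have edge: "{\<phi> a, \<phi> b} \<in> cprod_E VA EA VB EB \<longleftrightarrow>
      (\<phi>1 a = \<phi>1 b \<and> {\<phi>2 a, \<phi>2 b} \<in> EB) \<or> (\<phi>2 a = \<phi>2 b \<and> {\<phi>1 a, \<phi>1 b} \<in> EA)"
    unfolding \<phi> using cprod_edge_iff[OF V] .
  have eq: "\<phi> a = \<phi> b \<longleftrightarrow> \<phi>1 a = \<phi>1 b \<and> \<phi>2 a = \<phi>2 b"
    unfolding \<phi> by simp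
  have "{\<phi>1 a, \<phi>1 b} \<notin> EA" if "\<phi>1 a = \<phi>1 b"
    using that signed_graph_edgeD(1)[OF sgA] by blast
  then show ?thesis
    unfolding pattern_edge_hom_def using sw edge eq M1 N1
    by (cases "(a, b) \<in> M"; cases "\<phi>1 a = \<phi>1 b") auto
qed

lemma is_pattern_hom_cprod_split:
  assumes sgA: "signed_graph VA EA \<sigma>A" and sgB: "signed_graph VB EB \<sigma>B"
    and K: "I \<subseteq> K \<times> K" "Q \<subseteq> K \<times> K"
    and \<phi>1: "\<phi>1 \<in> K \<rightarrow>\<^sub>E VA" and \<phi>2: "\<phi>2 \<in> K \<rightarrow>\<^sub>E VB"
    and M1: "M1 \<inter> I = {(a, b) \<in> M. \<phi>1 a \<noteq> \<phi>1 b}"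
    and N1: "N1 \<inter> I = {(a, b) \<in> I. switched_negative EA \<sigma>A \<phi>1 y a b}"
  shows "is_pattern_hom (cprod_E VA EA VB EB) (cprod_sig \<sigma>A \<sigma>B) I M N Q {}
           (\<lambda>a\<in>K. (\<phi>1 a, \<phi>2 a)) (\<lambda>a\<in>K. y a \<noteq> z a) \<longleftrightarrow>
         is_pattern_hom EA \<sigma>A I M1 N1 Q {} \<phi>1 y \<and>
         is_pattern_hom EB \<sigma>B I (M - M1) {e. (e \<in> N) \<noteq> (e \<in> N1)} Q {} \<phi>2 z"
proof -
  have edge: "pattern_edge_hom (cprod_E VA EA VB EB) (cprod_sig \<sigma>A \<sigma>B) M N
      (\<lambda>a\<in>K. (\<phi>1 a, \<phi>2 a)) (\<lambda>a\<in>K. y a \<noteq> z a) a b \<longleftrightarrow>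
    pattern_edge_hom EA \<sigma>A M1 N1 \<phi>1 y a b \<and>
    pattern_edge_hom EB \<sigma>B (M - M1) {e. (e \<in> N) \<noteq> (e \<in> N1)} \<phi>2 z a b" if ab: "(a, b) \<in> I" for a b
  proof (rule pattern_edge_hom_cprod[OF sgA sgB])
    have "a \<in> K" "b \<in> K" using ab K by auto
    then show "\<phi>1 a \<in> VA" "\<phi>1 b \<in> VA" "\<phi>2 a \<in> VB" "\<phi>2 b \<in> VB"
      "(\<lambda>a\<in>K. (\<phi>1 a, \<phi>2 a)) a = (\<phi>1 a, \<phi>2 a)" "(\<lambda>a\<in>K. (\<phi>1 a, \<phi>2 a)) b = (\<phi>1 b, \<phi>2 b)"
      "(\<lambda>a\<in>K. y a \<noteq> z a) a = (y a \<noteq> z a)" "(\<lambda>a\<in>K. y a \<noteq> z a) b = (y b \<noteq> z b)"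
      using \<phi>1 \<phi>2 by auto
    show "(a, b) \<in> M1 \<longleftrightarrow> (a, b) \<in> M \<and> \<phi>1 a \<noteq> \<phi>1 b"
      using M1 ab by blast
    show "(a, b) \<in> N1 \<longleftrightarrow> switched_negative EA \<sigma>A \<phi>1 y a b"
      using N1 ab by blast
  qed
  have eq: "(\<lambda>a\<in>K. (\<phi>1 a, \<phi>2 a)) a = (\<lambda>a\<in>K. (\<phi>1 a, \<phi>2 a)) b \<longleftrightarrow> \<phi>1 a = \<phi>1 b \<and> \<phi>2 a = \<phi>2 b"
    if "(a, b) \<in> Q" for a b
    using that K by auto
  show ?thesis
    unfolding is_pattern_hom_def using edge eq by fast
qed

lemma is_pattern_hom_cprod_iff:
  assumes sgA: "signed_graph VA EA \<sigma>A" and sgB: "signed_graph VB EB \<sigma>B"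
    and K: "I \<subseteq> K \<times> K" "Q \<subseteq> K \<times> K" and MI: "M \<subseteq> I"
    and \<phi>1: "\<phi>1 \<in> K \<rightarrow>\<^sub>E VA" and \<phi>2: "\<phi>2 \<in> K \<rightarrow>\<^sub>E VB"
  shows "is_pattern_hom (cprod_E VA EA VB EB) (cprod_sig \<sigma>A \<sigma>B) I M N Q {}
           (\<lambda>a\<in>K. (\<phi>1 a, \<phi>2 a)) (\<lambda>a\<in>K. y a \<noteq> z a) \<longleftrightarrow>
         (\<exists>M1\<in>Pow M. \<exists>N1\<in>Pow I. is_pattern_hom EA \<sigma>A I M1 N1 Q {} \<phi>1 y \<and>
            is_pattern_hom EB \<sigma>B I (M - M1) {e. (e \<in> N) \<noteq> (e \<in> N1)} Q {} \<phi>2 z)"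
    (is "?AB \<longleftrightarrow> (\<exists>M1\<in>Pow M. \<exists>N1\<in>Pow I. ?A M1 N1 \<and> ?B M1 N1)")
proof
  assume ?AB
  define M1 where "M1 = {(a, b) \<in> M. \<phi>1 a \<noteq> \<phi>1 b}"
  define N1 where "N1 = {(a, b) \<in> I. switched_negative EA \<sigma>A \<phi>1 y a b}"
  have "?A M1 N1 \<and> ?B M1 N1"
    using \<open>?AB\<close> is_pattern_hom_cprod_split[OF sgA sgB K \<phi>1 \<phi>2, of M1 M N1 y N z] MI
    unfolding M1_def N1_def by blast
  moreover have "M1 \<in> Pow M" "N1 \<in> Pow I" unfolding M1_def N1_def by auto
  ultimately show "\<exists>M1\<in>Pow M. \<exists>N1\<in>Pow I. ?A M1 N1 \<and> ?B M1 N1" by blast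
next
  assume "\<exists>M1\<in>Pow M. \<exists>N1\<in>Pow I. ?A M1 N1 \<and> ?B M1 N1"
  then obtain M1 N1 where sub: "M1 \<subseteq> M" "N1 \<subseteq> I" and A: "?A M1 N1" and B: "?B M1 N1"
    by blast
  have "M1 \<inter> I = {(a, b) \<in> M. \<phi>1 a \<noteq> \<phi>1 b}"
    using is_pattern_hom_labels(1)[OF sgA A] sub MI by blast
  then show ?AB
    using is_pattern_hom_cprod_split[OF sgA sgB K \<phi>1 \<phi>2 _ is_pattern_hom_labels(2)[OF sgA A]] A B
    by blast
qed

lemma pattern_homs_disjoint:
  assumes sg: "signed_graph V E \<sigma>" and "M \<subseteq> I" "M' \<subseteq> I" "N \<subseteq> I" "N' \<subseteq> I"
    and "(M, N) \<noteq> (M', N')"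
  shows "pattern_homs V E \<sigma> K I M N Q D \<inter> pattern_homs V E \<sigma> K I M' N' Q D = {}"
proof (rule ccontr)
  assume "\<not> ?thesis"
  then obtain \<phi> x where hom: "is_pattern_hom E \<sigma> I M N Q D \<phi> x"
    and hom': "is_pattern_hom E \<sigma> I M' N' Q D \<phi> x"
    unfolding pattern_homs_def by blast
  have "M \<inter> I = M' \<inter> I" "N \<inter> I = N' \<inter> I"
    unfolding is_pattern_hom_labels[OF sg hom] is_pattern_hom_labels[OF sg hom'] by simp_all
  then show False using assms(2-6) by (simp add: Int_absorb2)
qed

lemma card_switchings: "finite K \<Longrightarrow> card (K \<rightarrow>\<^sub>E (UNIV :: bool set)) = 2 ^ card K"
  by (simp add: card_PiE)

lemma card_factor_lifts:
  fixes VA :: "'a set" and VB :: "'b set" and K :: "'k set"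
    and P :: "('k \<Rightarrow> 'a \<times> 'b) \<Rightarrow> ('k \<Rightarrow> bool) \<Rightarrow> bool"
  assumes "finite K"
  shows "card {((\<phi>1, y), (\<phi>2, z)). \<phi>1 \<in> K \<rightarrow>\<^sub>E VA \<and> y \<in> K \<rightarrow>\<^sub>E (UNIV :: bool set) \<and> \<phi>2 \<in> K \<rightarrow>\<^sub>E VB \<and>
            z \<in> K \<rightarrow>\<^sub>E UNIV \<and> P (\<lambda>a\<in>K. (\<phi>1 a, \<phi>2 a)) (\<lambda>a\<in>K. y a \<noteq> z a)} =
         2 ^ card K * card {(\<phi>, x). \<phi> \<in> K \<rightarrow>\<^sub>E VA \<times> VB \<and> x \<in> K \<rightarrow>\<^sub>E UNIV \<and> P \<phi> x}"
    (is "card ?T = _ * card ?H")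
proof -
  let ?X = "K \<rightarrow>\<^sub>E (UNIV :: bool set)"
  define merge where "merge = (\<lambda>((\<phi>1 :: 'k \<Rightarrow> 'a, y), (\<phi>2 :: 'k \<Rightarrow> 'b, z)).
    (((\<lambda>a\<in>K. (\<phi>1 a, \<phi>2 a)), (\<lambda>a\<in>K. (y a :: bool) \<noteq> z a)), y))"
  define unmerge where "unmerge = (\<lambda>((\<phi> :: 'k \<Rightarrow> 'a \<times> 'b, x), y).
    ((\<lambda>a\<in>K. fst (\<phi> a), y), (\<lambda>a\<in>K. snd (\<phi> a), \<lambda>a\<in>K. (x a :: bool) \<noteq> y a)))"
  have "bij_betw merge ?T (?H \<times> ?X)"
  proof (rule bij_betw_byWitness[where f' = unmerge])
    show "\<forall>p\<in>?T. unmerge (merge p) = p"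
      unfolding merge_def unmerge_def by (auto simp: fun_eq_iff PiE_iff extensional_def)
    show "\<forall>p\<in>?H \<times> ?X. merge (unmerge p) = p"
      unfolding merge_def unmerge_def by (auto simp: fun_eq_iff PiE_iff extensional_def)
    show "merge ` ?T \<subseteq> ?H \<times> ?X"
      unfolding merge_def by auto
    show "unmerge ` (?H \<times> ?X) \<subseteq> ?T"
    proof (rule image_subsetI)
      fix p assume "p \<in> ?H \<times> ?X"
      then obtain \<phi> x y where p: "p = ((\<phi>, x), y)" and y: "y \<in> ?X"
        and \<phi>: "\<phi> \<in> K \<rightarrow>\<^sub>E VA \<times> VB" "x \<in> ?X" and "P \<phi> x"
        by auto
      have eqs: "(\<lambda>a\<in>K. ((\<lambda>a\<in>K. fst (\<phi> a)) a, (\<lambda>a\<in>K. snd (\<phi> a)) a)) = \<phi>"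
          "(\<lambda>a\<in>K. y a \<noteq> (\<lambda>a\<in>K. x a \<noteq> y a) a) = x"
        using \<phi> y by (auto simp: fun_eq_iff PiE_iff extensional_def)
      have "((\<lambda>a\<in>K. fst (\<phi> a), y), (\<lambda>a\<in>K. snd (\<phi> a), \<lambda>a\<in>K. x a \<noteq> y a)) \<in> ?T"
        unfolding mem_Collect_eq case_prod_conv eqs using \<phi> y \<open>P \<phi> x\<close> by (auto simp: PiE_iff)
      then show "unmerge p \<in> ?T" unfolding p unmerge_def by simp
    qed
  qed
  then show ?thesis
    by (simp add: bij_betw_same_card card_cartesian_product card_switchings assms)
qed

lemma card_pattern_homs_cprod:
  fixes VA :: "'a set" and VB :: "'b set" and K :: "'k set"
  assumes sgA: "signed_graph VA EA \<sigma>A" and sgB: "signed_graph VB EB \<sigma>B"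
    and fin: "finite VA" "finite VB" "finite K"
    and K: "I \<subseteq> K \<times> K" "Q \<subseteq> K \<times> K" and MI: "M \<subseteq> I"
  shows "2 ^ card K * card (pattern_homs (cprod_V VA VB) (cprod_E VA EA VB EB) (cprod_sig \<sigma>A \<sigma>B)
            K I M N Q {}) =
         (\<Sum>(M1, N1)\<in>Pow M \<times> Pow I. card (pattern_homs VA EA \<sigma>A K I M1 N1 Q {}) *
            card (pattern_homs VB EB \<sigma>B K I (M - M1) {e. (e \<in> N) \<noteq> (e \<in> N1)} Q {}))"
proof -
  let ?X = "K \<rightarrow>\<^sub>E (UNIV :: bool set)"
  let ?H = "pattern_homs (cprod_V VA VB) (cprod_E VA EA VB EB) (cprod_sig \<sigma>A \<sigma>B) K I M N Q {}"
  let ?HA = "\<lambda>(M1, N1). pattern_homs VA EA \<sigma>A K I M1 N1 Q {}"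
  let ?HB = "\<lambda>(M1, N1). pattern_homs VB EB \<sigma>B K I (M - M1) {e. (e \<in> N) \<noteq> (e \<in> N1)} Q {}"
  define T where "T = {((\<phi>1, y), (\<phi>2, z)). \<phi>1 \<in> K \<rightarrow>\<^sub>E VA \<and> y \<in> ?X \<and> \<phi>2 \<in> K \<rightarrow>\<^sub>E VB \<and> z \<in> ?X \<and>
    is_pattern_hom (cprod_E VA EA VB EB) (cprod_sig \<sigma>A \<sigma>B) I M N Q {}
      (\<lambda>a\<in>K. (\<phi>1 a, \<phi>2 a)) (\<lambda>a\<in>K. y a \<noteq> z a)}"
  have "card T = card ?H * 2 ^ card K"
    unfolding T_def pattern_homs_def cprod_V_def mult.commute[of _ "2 ^ card K"]
    by (rule card_factor_lifts[OF fin(3)])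
  also have "T = (\<Union>t\<in>Pow M \<times> Pow I. ?HA t \<times> ?HB t)"
  proof (rule set_eqI)
    fix p :: "(('k \<Rightarrow> 'a) \<times> ('k \<Rightarrow> bool)) \<times> ('k \<Rightarrow> 'b) \<times> ('k \<Rightarrow> bool)"
    obtain \<phi>1 y \<phi>2 z where p: "p = ((\<phi>1, y), (\<phi>2, z))" by (metis prod.collapse)
    show "p \<in> T \<longleftrightarrow> p \<in> (\<Union>t\<in>Pow M \<times> Pow I. ?HA t \<times> ?HB t)"
    proof (cases "\<phi>1 \<in> K \<rightarrow>\<^sub>E VA \<and> \<phi>2 \<in> K \<rightarrow>\<^sub>E VB")
      case True
      then show ?thesis
        using is_pattern_hom_cprod_iff[OF sgA sgB K MI conjunct1[OF True] conjunct2[OF True]]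
        unfolding p T_def pattern_homs_def by auto
    next
      case False
      then show ?thesis unfolding p T_def pattern_homs_def by auto
    qed
  qed
  also have "card \<dots> = (\<Sum>t\<in>Pow M \<times> Pow I. card (?HA t \<times> ?HB t))"
  proof (rule card_UN_disjoint)
    have "finite I" using fin(3) by (intro finite_subset[OF K(1)] finite_cartesian_product)
    then show "finite (Pow M \<times> Pow I)" using finite_subset[OF MI] by simp
    show "\<forall>t\<in>Pow M \<times> Pow I. finite (?HA t \<times> ?HB t)"
      using fin by (auto intro!: finite_pattern_homs)
    show "\<forall>t\<in>Pow M \<times> Pow I. \<forall>t'\<in>Pow M \<times> Pow I. t \<noteq> t' \<longrightarrow> ?HA t \<times> ?HB t \<inter> ?HA t' \<times> ?HB t' = {}"
    proof (intro ballI impI)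
      fix t t' assume t: "t \<in> Pow M \<times> Pow I" "t' \<in> Pow M \<times> Pow I" and "t \<noteq> t'"
      obtain M1 N1 M1' N1' where tt: "t = (M1, N1)" "t' = (M1', N1')" by fastforce
      have "?HA t \<inter> ?HA t' = {}"
        unfolding tt case_prod_conv
        by (rule pattern_homs_disjoint[OF sgA]) (use t tt \<open>t \<noteq> t'\<close> MI in auto)
      then show "?HA t \<times> ?HB t \<inter> ?HA t' \<times> ?HB t' = {}" by blast
    qed
  qed
  finally show ?thesis
    by (simp add: card_cartesian_product case_prod_beta mult.commute)
qed

lemma card_pattern_homs_shift:
  fixes x0 :: "'k \<Rightarrow> bool" and V :: "'v set"
  assumes x0: "x0 \<in> K \<rightarrow>\<^sub>E UNIV" and K: "I \<subseteq> K \<times> K"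
    and N0: "\<And>a b. (a, b) \<in> I \<Longrightarrow> (a, b) \<in> N0 \<longleftrightarrow> x0 a \<noteq> x0 b"
  shows "card (pattern_homs V E \<sigma> K I M {e. (e \<in> N) \<noteq> (e \<in> N0)} Q D) =
         card (pattern_homs V E \<sigma> K I M N Q D)"
proof -
  define h where "h = (\<lambda>(\<phi> :: 'k \<Rightarrow> 'v, x). (\<phi>, \<lambda>a\<in>K. x a \<noteq> x0 a))"
  have hom: "is_pattern_hom E \<sigma> I M N Q D \<phi> (\<lambda>a\<in>K. x a \<noteq> x0 a) \<longleftrightarrow>
      is_pattern_hom E \<sigma> I M {e. (e \<in> N) \<noteq> (e \<in> N0)} Q D \<phi> x" for \<phi> x
  proof -
    have "pattern_edge_hom E \<sigma> M N \<phi> (\<lambda>a\<in>K. x a \<noteq> x0 a) a b \<longleftrightarrow>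
        pattern_edge_hom E \<sigma> M {e. (e \<in> N) \<noteq> (e \<in> N0)} \<phi> x a b" if "(a, b) \<in> I" for a b
      using that K N0[OF that] unfolding pattern_edge_hom_def switched_negative_def by auto
    then show ?thesis unfolding is_pattern_hom_def by fast
  qed
  have invol: "(\<lambda>a\<in>K. (\<lambda>a\<in>K. x a \<noteq> x0 a) a \<noteq> x0 a) = x" if "x \<in> K \<rightarrow>\<^sub>E UNIV" for x
    using that by (auto simp: fun_eq_iff PiE_iff extensional_def)
  have "bij_betw h (pattern_homs V E \<sigma> K I M {e. (e \<in> N) \<noteq> (e \<in> N0)} Q D)
      (pattern_homs V E \<sigma> K I M N Q D)"
  proof (rule bij_betw_byWitness[where f' = h])
    show "h ` pattern_homs V E \<sigma> K I M {e. (e \<in> N) \<noteq> (e \<in> N0)} Q D \<subseteq> pattern_homs V E \<sigma> K I M N Q D"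
      using hom by (auto simp: h_def pattern_homs_def)
    show "h ` pattern_homs V E \<sigma> K I M N Q D \<subseteq> pattern_homs V E \<sigma> K I M {e. (e \<in> N) \<noteq> (e \<in> N0)} Q D"
      using hom[symmetric] invol by (auto simp: h_def pattern_homs_def)
  qed (use invol in \<open>auto simp: h_def pattern_homs_def\<close>)
  then show ?thesis by (rule bij_betw_same_card)
qed

lemma collapsed_pattern_homs_nonempty:
  assumes sg: "signed_graph V E \<sigma>" and v: "v \<in> V" and K: "I \<subseteq> K \<times> K" "Q \<subseteq> K \<times> K"
  shows "pattern_homs V E \<sigma> K I {} {} Q {} \<noteq> {}"
proof -
  have "is_pattern_hom E \<sigma> I {} {} Q {} (\<lambda>a\<in>K. v) (\<lambda>a\<in>K. False)"
    using K negative_edge_loop[OF sg, of v]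
    unfolding is_pattern_hom_def pattern_edge_hom_def switched_negative_def by auto
  then have "(\<lambda>a\<in>K. v, \<lambda>a\<in>K. False) \<in> pattern_homs V E \<sigma> K I {} {} Q {}"
    unfolding pattern_homs_def using v by auto
  then show ?thesis by blast
qed

lemma card_pattern_homs_cprod_leading_term:
  assumes sgA: "signed_graph VA EA \<sigma>A" and sgH: "signed_graph VH EH \<sigma>H"
    and fin: "finite VA" "finite VH" "finite K"
    and K: "I \<subseteq> K \<times> K" "Q \<subseteq> K \<times> K" and MI: "M \<subseteq> I"
  shows "2 ^ card K * card (pattern_homs (cprod_V VA VH) (cprod_E VA EA VH EH) (cprod_sig \<sigma>A \<sigma>H)
            K I M N Q {}) =
         (\<Sum>N0\<in>Pow I. card (pattern_homs VA EA \<sigma>A K I {} N0 Q {})) *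
           card (pattern_homs VH EH \<sigma>H K I M N Q {}) +
         (\<Sum>M1\<in>Pow M - {{}}. \<Sum>N1\<in>Pow I. card (pattern_homs VA EA \<sigma>A K I M1 N1 Q {}) *
            card (pattern_homs VH EH \<sigma>H K I (M - M1) {e. (e \<in> N) \<noteq> (e \<in> N1)} Q {}))"
proof -
  let ?a = "\<lambda>M1 N1. card (pattern_homs VA EA \<sigma>A K I M1 N1 Q {})"
  let ?b = "\<lambda>M1 N1. card (pattern_homs VH EH \<sigma>H K I (M - M1) {e. (e \<in> N) \<noteq> (e \<in> N1)} Q {})"
  \<comment> \<open>A collapsed pattern homomorphism makes N0 the coboundary of its switching x0, and
      shifting N by a coboundary is absorbed by switching the pattern.\<close>
  have lead: "?a {} N0 * ?b {} N0 = ?a {} N0 * card (pattern_homs VH EH \<sigma>H K I M N Q {})" for N0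
  proof (cases "pattern_homs VA EA \<sigma>A K I {} N0 Q {} = {}")
    case False
    then obtain \<phi> x0 where x0: "x0 \<in> K \<rightarrow>\<^sub>E UNIV"
      and hom: "is_pattern_hom EA \<sigma>A I {} N0 Q {} \<phi> x0"
      unfolding pattern_homs_def by auto
    have N0: "(a, b) \<in> N0 \<longleftrightarrow> x0 a \<noteq> x0 b" if "(a, b) \<in> I" for a b
    proof -
      have "\<phi> a = \<phi> b" using is_pattern_hom_labels(1)[OF sgA hom] that by blast
      moreover have "(a, b) \<in> N0 \<longleftrightarrow> switched_negative EA \<sigma>A \<phi> x0 a b"
        using is_pattern_hom_labels(2)[OF sgA hom] that by blast
      ultimately show ?thesis
        using negative_edge_loop[OF sgA, of "\<phi> b"] unfolding switched_negative_def by simp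
    qed
    show ?thesis using card_pattern_homs_shift[OF x0 K(1) N0, of VH EH \<sigma>H M N Q "{}"] by simp
  qed simp
  have "finite (Pow M)"
    using fin(3) by (intro finite_Pow_iff[THEN iffD2] finite_subset[OF MI] finite_subset[OF K(1)]) auto
  have "2 ^ card K * card (pattern_homs (cprod_V VA VH) (cprod_E VA EA VH EH) (cprod_sig \<sigma>A \<sigma>H)
      K I M N Q {}) = (\<Sum>M1\<in>Pow M. \<Sum>N1\<in>Pow I. ?a M1 N1 * ?b M1 N1)"
    unfolding card_pattern_homs_cprod[OF sgA sgH fin K MI] sum.cartesian_product by simp
  also have "\<dots> = (\<Sum>N1\<in>Pow I. ?a {} N1 * ?b {} N1) + (\<Sum>M1\<in>Pow M - {{}}. \<Sum>N1\<in>Pow I. ?a M1 N1 * ?b M1 N1)"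
    by (subst sum.remove[OF \<open>finite (Pow M)\<close>, of "{}"]) simp_all
  finally show ?thesis unfolding lead sum_distrib_right .
qed

lemma card_pattern_homs_cancel:
  assumes sgA: "signed_graph VA EA \<sigma>A" and sgB: "signed_graph VB EB \<sigma>B"
    and sgC: "signed_graph VC EC \<sigma>C"
    and fin: "finite VA" "finite VB" "finite VC" "finite K" and "VA \<noteq> {}"
    and K: "I \<subseteq> K \<times> K" "Q \<subseteq> K \<times> K"
    and prod: "\<And>M N. M \<subseteq> I \<Longrightarrow>
      card (pattern_homs (cprod_V VA VB) (cprod_E VA EA VB EB) (cprod_sig \<sigma>A \<sigma>B) K I M N Q {}) =
      card (pattern_homs (cprod_V VA VC) (cprod_E VA EA VC EC) (cprod_sig \<sigma>A \<sigma>C) K I M N Q {})"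
    and MI: "M \<subseteq> I"
  shows "card (pattern_homs VB EB \<sigma>B K I M N Q {}) = card (pattern_homs VC EC \<sigma>C K I M N Q {})"
proof -
  define c where "c = (\<Sum>N0\<in>Pow I. card (pattern_homs VA EA \<sigma>A K I {} N0 Q {}))"
  have "finite I" using fin(4) by (intro finite_subset[OF K(1)] finite_cartesian_product)
  obtain v where "v \<in> VA" using \<open>VA \<noteq> {}\<close> by blast
  have "card (pattern_homs VA EA \<sigma>A K I {} {} Q {}) > 0"
    using collapsed_pattern_homs_nonempty[OF sgA \<open>v \<in> VA\<close> K] finite_pattern_homs fin
    by (simp add: card_gt_0_iff)
  then have "c > 0"
    unfolding c_def using \<open>finite I\<close> by (intro sum_pos2[of _ "{}"]) auto
  have "finite M" using finite_subset[OF MI \<open>finite I\<close>] .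
  then show ?thesis using MI
  proof (induction M arbitrary: N rule: finite_psubset_induct)
    case (psubset M)
    have IH: "card (pattern_homs VB EB \<sigma>B K I (M - M1) N' Q {}) =
        card (pattern_homs VC EC \<sigma>C K I (M - M1) N' Q {})" if "M1 \<in> Pow M - {{}}" for M1 N'
    proof -
      have "M - M1 \<subset> M" "M - M1 \<subseteq> I" using that psubset.prems by auto
      then show ?thesis using psubset.IH by blast
    qed
    let ?RB = "\<Sum>M1\<in>Pow M - {{}}. \<Sum>N1\<in>Pow I. card (pattern_homs VA EA \<sigma>A K I M1 N1 Q {}) *
      card (pattern_homs VB EB \<sigma>B K I (M - M1) {e. (e \<in> N) \<noteq> (e \<in> N1)} Q {})"
    let ?RC = "\<Sum>M1\<in>Pow M - {{}}. \<Sum>N1\<in>Pow I. card (pattern_homs VA EA \<sigma>A K I M1 N1 Q {}) *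
      card (pattern_homs VC EC \<sigma>C K I (M - M1) {e. (e \<in> N) \<noteq> (e \<in> N1)} Q {})"
    have "c * card (pattern_homs VB EB \<sigma>B K I M N Q {}) + ?RB =
      2 ^ card K * card (pattern_homs (cprod_V VA VB) (cprod_E VA EA VB EB) (cprod_sig \<sigma>A \<sigma>B) K I M N Q {})"
      unfolding c_def card_pattern_homs_cprod_leading_term[OF sgA sgB fin(1,2,4) K psubset.prems] ..
    also have "\<dots> =
      2 ^ card K * card (pattern_homs (cprod_V VA VC) (cprod_E VA EA VC EC) (cprod_sig \<sigma>A \<sigma>C) K I M N Q {})"
      using prod[OF psubset.prems] by simp
    also have "\<dots> = c * card (pattern_homs VC EC \<sigma>C K I M N Q {}) + ?RC"
      unfolding c_def card_pattern_homs_cprod_leading_term[OF sgA sgC fin(1,3,4) K psubset.prems] ..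
    also have "?RC = ?RB"
      by (intro sum.cong refl) (simp add: IH)
    finally have "c * card (pattern_homs VB EB \<sigma>B K I M N Q {}) = c * card (pattern_homs VC EC \<sigma>C K I M N Q {})"
      by simp
    then show ?case using \<open>c > 0\<close> by simp
  qed
qed

lemma card_pattern_homs_split_pair:
  assumes "finite V" "finite K"
  shows "card (pattern_homs V E \<sigma> K I M N Q D) =
         card (pattern_homs V E \<sigma> K I M N Q (insert p D)) + card (pattern_homs V E \<sigma> K I M N (insert p Q) D)"
proof -
  have "pattern_homs V E \<sigma> K I M N Q D =
      pattern_homs V E \<sigma> K I M N Q (insert p D) \<union> pattern_homs V E \<sigma> K I M N (insert p Q) D"
    unfolding pattern_homs_def is_pattern_hom_def by auto
  moreover have "pattern_homs V E \<sigma> K I M N Q (insert p D) \<inter> pattern_homs V E \<sigma> K I M N (insert p Q) D = {}"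
    unfolding pattern_homs_def is_pattern_hom_def by auto
  ultimately show ?thesis
    using assms by (simp add: card_Un_disjoint finite_pattern_homs)
qed

lemma card_pattern_homs_eq_with_separations:
  assumes fin: "finite V" "finite V'" "finite K" and D: "finite D" "D \<subseteq> K \<times> K" and Q: "Q \<subseteq> K \<times> K"
    and eq: "\<And>Q. Q \<subseteq> K \<times> K \<Longrightarrow>
      card (pattern_homs V E \<sigma> K I M N Q {}) = card (pattern_homs V' E' \<sigma>' K I M N Q {})"
  shows "card (pattern_homs V E \<sigma> K I M N Q D) = card (pattern_homs V' E' \<sigma>' K I M N Q D)"
  using D Q
proof (induction D arbitrary: Q rule: finite_induct)
  case empty
  then show ?case using eq by blast
next
  case (insert p D)
  have "D \<subseteq> K \<times> K" "insert p Q \<subseteq> K \<times> K" using insert.prems by auto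
  then have "card (pattern_homs V E \<sigma> K I M N Q' D) = card (pattern_homs V' E' \<sigma>' K I M N Q' D)"
    if "Q' \<in> {Q, insert p Q}" for Q'
    using insert.IH insert.prems(2) that by blast
  then show ?case
    using card_pattern_homs_split_pair[OF fin(1,3), of E \<sigma> I M N Q D p]
      card_pattern_homs_split_pair[OF fin(2,3), of E' \<sigma>' I M N Q D p]
    by simp
qed

lemma card_pattern_homs_eq_if_cprod_equiv:
  fixes K :: "'k set"
  assumes sgA: "signed_graph VA EA \<sigma>A" and sgB: "signed_graph VB EB \<sigma>B"
    and sgC: "signed_graph VC EC \<sigma>C"
    and fin: "finite VA" "finite VB" "finite VC" "finite K" and "VA \<noteq> {}"
    and eqv: "sg_equiv (cprod_V VA VB) (cprod_E VA EA VB EB) (cprod_sig \<sigma>A \<sigma>B)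
                       (cprod_V VA VC) (cprod_E VA EA VC EC) (cprod_sig \<sigma>A \<sigma>C)"
    and K: "I \<subseteq> K \<times> K" "Q \<subseteq> K \<times> K" "D \<subseteq> K \<times> K" and MI: "M \<subseteq> I"
  shows "card (pattern_homs VB EB \<sigma>B K I M N Q D) = card (pattern_homs VC EC \<sigma>C K I M N Q D)"
proof (rule card_pattern_homs_eq_with_separations[OF fin(2-4) _ K(3,2)])
  show "finite D" using fin(4) by (intro finite_subset[OF K(3)] finite_cartesian_product)
  fix Q' :: "('k \<times> 'k) set" assume Q': "Q' \<subseteq> K \<times> K"
  show "card (pattern_homs VB EB \<sigma>B K I M N Q' {}) = card (pattern_homs VC EC \<sigma>C K I M N Q' {})"
    using card_pattern_homs_sg_equiv[OF signed_graph_cprod[OF sgA sgB] eqv K(1) Q']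
    by (intro card_pattern_homs_cancel[OF sgA sgB sgC fin \<open>VA \<noteq> {}\<close> K(1) Q' _ MI]) simp
qed

lemma switching_embedding_if_card_pattern_homs_eq:
  fixes VB :: "'b set" and VC :: "'c set"
  assumes sgB: "signed_graph VB EB \<sigma>B" and sgC: "signed_graph VC EC \<sigma>C" and fin: "finite VB"
    and eq: "\<And>I M N D. I \<subseteq> VB \<times> VB \<Longrightarrow> D \<subseteq> VB \<times> VB \<Longrightarrow> M \<subseteq> I \<Longrightarrow>
      card (pattern_homs VB EB \<sigma>B VB I M N {} D) = card (pattern_homs VC EC \<sigma>C VB I M N {} D)"
  shows "\<exists>g S. inj_on g VB \<and> g ` VB \<subseteq> VC \<and> S \<subseteq> VB \<and>
           (\<forall>e\<in>EB. g ` e \<in> EC \<and> \<sigma>C (g ` e) = switch \<sigma>B S e)"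
proof -
  \<comment> \<open>B itself as a pattern; the identity with the trivial switching is a homomorphism.\<close>
  define I where "I = {(u, v) \<in> VB \<times> VB. {u, v} \<in> EB}"
  define N where "N = {(u, v) \<in> I. \<sigma>B {u, v} = -1}"
  define D where "D = {(u, v) \<in> VB \<times> VB. u \<noteq> v}"
  have "pattern_edge_hom EB \<sigma>B I N (\<lambda>u\<in>VB. u) (\<lambda>u\<in>VB. False) u v" if "(u, v) \<in> I" for u v
    using that unfolding I_def N_def pattern_edge_hom_def switched_negative_def negative_edge_def by simp
  then have "is_pattern_hom EB \<sigma>B I I N {} D (\<lambda>u\<in>VB. u) (\<lambda>u\<in>VB. False)"
    unfolding is_pattern_hom_def D_def by auto
  then have "(\<lambda>u\<in>VB. u, \<lambda>u\<in>VB. False) \<in> pattern_homs VB EB \<sigma>B VB I I N {} D"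
    unfolding pattern_homs_def by auto
  then have "card (pattern_homs VB EB \<sigma>B VB I I N {} D) \<noteq> 0"
    using fin by (auto simp: finite_pattern_homs)
  moreover have "I \<subseteq> VB \<times> VB" "D \<subseteq> VB \<times> VB" unfolding I_def D_def by auto
  ultimately have "pattern_homs VC EC \<sigma>C VB I I N {} D \<noteq> {}"
    using eq[of I D I N] by auto
  then obtain \<phi> x where \<phi>: "\<phi> \<in> VB \<rightarrow>\<^sub>E VC" and hom: "is_pattern_hom EC \<sigma>C I I N {} D \<phi> x"
    unfolding pattern_homs_def by auto
  define S where "S = {u \<in> VB. x u}"
  have "inj_on \<phi> VB"
    using hom unfolding is_pattern_hom_def D_def by (auto intro: inj_onI)
  moreover have "\<phi> ` VB \<subseteq> VC" using \<phi> by auto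
  moreover have "\<phi> ` e \<in> EC \<and> \<sigma>C (\<phi> ` e) = switch \<sigma>B S e" if e: "e \<in> EB" for e
  proof -
    obtain u v where uv: "e = {u, v}" "u \<in> VB" "v \<in> VB" "u \<noteq> v"
      using sgB e unfolding signed_graph_def by blast
    have "(u, v) \<in> I" unfolding I_def using uv e by auto
    then have edge: "{\<phi> u, \<phi> v} \<in> EC"
      and sign: "\<sigma>B {u, v} = -1 \<longleftrightarrow> negative_edge EC \<sigma>C (\<phi> u) (\<phi> v) \<noteq> (x u \<noteq> x v)"
      using hom unfolding is_pattern_hom_def pattern_edge_hom_def switched_negative_def N_def by auto
    have "\<sigma>C {\<phi> u, \<phi> v} = (if x u \<noteq> x v then - \<sigma>B {u, v} else \<sigma>B {u, v})"
      using sign edge signed_graph_sign[OF sgB, of "{u, v}"] signed_graph_sign[OF sgC edge] e uv(1)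
      by (cases "x u"; cases "x v") (auto simp: negative_edge_def)
    moreover have "switch \<sigma>B S e = (if x u \<noteq> x v then - \<sigma>B {u, v} else \<sigma>B {u, v})"
      unfolding uv(1) switch_doubleton[OF uv(4)] S_def using uv(2,3) by simp
    ultimately show ?thesis using edge uv(1) by simp
  qed
  moreover have "S \<subseteq> VB" unfolding S_def by auto
  ultimately show ?thesis by blast
qed

lemma sg_equiv_if_switching_embeddings:
  assumes sgB: "signed_graph VB EB \<sigma>B" and sgC: "signed_graph VC EC \<sigma>C"
    and fin: "finite VB" "finite VC"
    and g: "inj_on g VB" "g ` VB \<subseteq> VC" "S \<subseteq> VB"
    and gE: "\<forall>e\<in>EB. g ` e \<in> EC \<and> \<sigma>C (g ` e) = switch \<sigma>B S e"
    and h: "inj_on h VC" "h ` VC \<subseteq> VB" and hE: "\<forall>e\<in>EC. h ` e \<in> EB"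
  shows "sg_equiv VB EB \<sigma>B VC EC \<sigma>C"
proof -
  have "card VB \<le> card VC" "card VC \<le> card VB"
    using card_inj_on_le[OF g(1,2) fin(2)] card_inj_on_le[OF h fin(1)] by auto
  then have "g ` VB = VC"
    using card_image[OF g(1)] by (intro card_subset_eq[OF fin(2) g(2)]) simp
  then have bij: "bij_betw g VB VC" using g(1) by (simp add: bij_betw_def)
  have EB: "EB \<subseteq> Pow VB" and EC: "EC \<subseteq> Pow VC"
    using sgB sgC by (auto dest: signed_graph_edges_subset)
  have injB: "inj_on ((`) g) EB" and injC: "inj_on ((`) h) EC"
    using inj_on_image[OF inj_on_subset[OF g(1)]] inj_on_image[OF inj_on_subset[OF h(1)]] EB EC
    by blast+
  have finE: "finite EB" "finite EC"
    using EB EC fin by (auto intro: finite_subset)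
  have "card EB \<le> card EC" "card EC \<le> card EB"
    using card_inj_on_le[OF injB _ finE(2)] card_inj_on_le[OF injC _ finE(1)] gE hE by blast+
  then have gEB: "(`) g ` EB = EC"
    using card_image[OF injB] gE by (intro card_subset_eq[OF finE(2)]) auto
  have "{u, v} \<in> EB \<longleftrightarrow> {g u, g v} \<in> EC" if "u \<in> VB" "v \<in> VB" for u v
  proof
    assume "{u, v} \<in> EB"
    then show "{g u, g v} \<in> EC" using gE by force
  next
    assume "{g u, g v} \<in> EC"
    then obtain e where "e \<in> EB" "g ` e = g ` {u, v}" using gEB by (metis image_empty image_insert imageE)
    moreover have "e \<subseteq> VB" "{u, v} \<subseteq> VB" using \<open>e \<in> EB\<close> EB that by auto
    ultimately have "e = {u, v}" using inj_on_image_eq_iff[OF g(1)] by blast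
    then show "{u, v} \<in> EB" using \<open>e \<in> EB\<close> by simp
  qed
  then show ?thesis unfolding sg_equiv_def using bij g(3) gE by blast
qed

theorem theorem4p11:
  fixes VA :: "'a set" and EA :: "'a set set" and \<pi>A :: "'a set \<Rightarrow> int"
    and VB :: "'b set" and EB :: "'b set set" and \<pi>B :: "'b set \<Rightarrow> int"
    and VC :: "'c set" and EC :: "'c set set" and \<pi>C :: "'c set \<Rightarrow> int"
  assumes "signed_graph VA EA \<pi>A" and "finite VA" and "VA \<noteq> {}"
    and "signed_graph VB EB \<pi>B" and "finite VB"
    and "signed_graph VC EC \<pi>C" and "finite VC"
    and "sg_equiv (cprod_V VA VB) (cprod_E VA EA VB EB) (cprod_sig \<pi>A \<pi>B)
                  (cprod_V VA VC) (cprod_E VA EA VC EC) (cprod_sig \<pi>A \<pi>C)"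
  shows "sg_equiv VB EB \<pi>B VC EC \<pi>C"
proof -
  note counts_eq = card_pattern_homs_eq_if_cprod_equiv[OF assms(1,4,6,2,5,7) _ assms(3,8)]
  obtain g S where g: "inj_on g VB" "g ` VB \<subseteq> VC" "S \<subseteq> VB"
    and gE: "\<forall>e\<in>EB. g ` e \<in> EC \<and> \<pi>C (g ` e) = switch \<pi>B S e"
    using switching_embedding_if_card_pattern_homs_eq[OF assms(4,6,5)] counts_eq assms(5) by blast
  obtain h S' where h: "inj_on h VC" "h ` VC \<subseteq> VB"
    and hE: "\<forall>e\<in>EC. h ` e \<in> EB \<and> \<pi>B (h ` e) = switch \<pi>C S' e"
    using switching_embedding_if_card_pattern_homs_eq[OF assms(6,4,7)] counts_eq[symmetric] assms(7)
    by blast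
  show ?thesis
    using sg_equiv_if_switching_embeddings[OF assms(4,6,5,7) g gE h] hE by blast
qed

end
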